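(* Let $A=P+\Xi$ be real $m\times n$ matrices and let $J$ be a rectangular index set. Denote by $(\hat u,\hat v)$ and $(u,v)$ the pairs of (unit) singular vectors of $\Pi_J(A)$ and $\Pi_J(P)$, respectively, corresponding to their largest singular values. Then $$\|\Pi_{u,v}(\Pi_J(P))-P\|_F\le\|\Pi_{\hat u,\hat v}(\Pi_J(P))-P\|_F\le\|\Pi_{\hat u,\hat v}(\Pi_J(A))-P\|_F .$$
   Context: For unit vectors $u,v$ and a matrix $X$, $\Pi_{u,v}(X)=(uu^T)X(vv^T)$. A rectangular index set is $J=J_1\times J_2$ with $J_1$ a set of row indices and $J_2$ a set of column indices; $\Pi_J(X)$ is the matrix that agrees with $X$ on $J$ and is zero outside $J$. *)

theory Defs
  imports "HOL-Analysis.Analysis"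
begin

text \<open>Real m x n matrices are rendered as real^'n^'m (rows indexed by 'm, columns by 'n).\<close>

definition frob_norm :: "real^'n^'m \<Rightarrow> real" where
  "frob_norm X = sqrt (\<Sum>i\<in>UNIV. \<Sum>j\<in>UNIV. (X$i$j)^2)"

definition outer :: "real^'m \<Rightarrow> real^'n \<Rightarrow> real^'n^'m" where
  "outer u w = (\<chi> i j. u$i * w$j)"

definition proj_uv :: "real^'m \<Rightarrow> real^'n \<Rightarrow> real^'n^'m \<Rightarrow> real^'n^'m" where
  "proj_uv u v X = outer u u ** X ** outer v v"

definition proj_J :: "'m set \<Rightarrow> 'n set \<Rightarrow> real^'n^'m \<Rightarrow> real^'n^'m" where
  "proj_J J1 J2 X = (\<chi> i j. if i \<in> J1 \<and> j \<in> J2 then X$i$j else 0)"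

text \<open>Largest singular value = operator (spectral) norm.\<close>
definition max_sing_val :: "real^'n^'m \<Rightarrow> real" where
  "max_sing_val M = onorm (\<lambda>x. M *v x)"

definition top_sing_pair :: "real^'n^'m \<Rightarrow> real^'m \<Rightarrow> real^'n \<Rightarrow> bool" where
  "top_sing_pair M u v \<longleftrightarrow> norm u = 1 \<and> norm v = 1 \<and>
     M *v v = max_sing_val M *\<^sub>R u \<and> transpose M *v u = max_sing_val M *\<^sub>R v"

end

theory Submission
  imports Defs
begin

text \<open>For unit vectors \<open>x, y\<close> the map \<open>\<Pi>\<^sub>x\<^sub>,\<^sub>y\<close> sends \<open>M\<close> to the rank-one matrix
  \<open>c x y\<^sup>T\<close> with \<open>c = x\<^sup>T M y\<close>, and expanding the Frobenius norm gives
  \<open>\<parallel>c x y\<^sup>T - P\<parallel>\<^sub>F\<^sup>2 = c\<^sup>2 - 2 c x\<^sup>T P y + \<parallel>P\<parallel>\<^sub>F\<^sup>2\<close>.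
  When \<open>x, y\<close> are supported on \<open>J\<close>, \<open>x\<^sup>T P y = x\<^sup>T \<Pi>\<^sub>J(P) y\<close>. With \<open>s = \<sigma>\<^sub>1(\<Pi>\<^sub>J(P)) = u\<^sup>T \<Pi>\<^sub>J(P) v\<close>,
  \<open>a = \<hat>u\<^sup>T \<Pi>\<^sub>J(P) \<hat>v\<close> and \<open>b = \<hat>u\<^sup>T \<Pi>\<^sub>J(A) \<hat>v\<close>, the three squared errors are therefore
  \<open>\<parallel>P\<parallel>\<^sub>F\<^sup>2 - s\<^sup>2\<close>, \<open>\<parallel>P\<parallel>\<^sub>F\<^sup>2 - a\<^sup>2\<close> and \<open>\<parallel>P\<parallel>\<^sub>F\<^sup>2 - a\<^sup>2 + (b - a)\<^sup>2\<close>;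
  the first inequality is \<open>\<bar>a\<bar> \<le> s\<close>, the second is \<open>(b - a)\<^sup>2 \<ge> 0\<close>.\<close>

lemma frob_norm_nonneg: "0 \<le> frob_norm X"
  by (simp add: frob_norm_def sum_nonneg)

lemma frob_norm_power2: "(frob_norm X)\<^sup>2 = (\<Sum>i\<in>UNIV. \<Sum>j\<in>UNIV. (X$i$j)\<^sup>2)"
  unfolding frob_norm_def by (simp add: sum_nonneg)

lemma sum_power2_eq_norm_power2:
  fixes x :: "real^'n"
  shows "(\<Sum>i\<in>UNIV. (x$i)\<^sup>2) = (norm x)\<^sup>2"
  unfolding power2_norm_eq_inner by (simp add: inner_vec_def power2_eq_square)

lemma inner_matrix_vector_mult_eq_sum:
  fixes x :: "real^'m" and y :: "real^'n" and M :: "real^'n^'m"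
  shows "x \<bullet> (M *v y) = (\<Sum>i\<in>UNIV. \<Sum>j\<in>UNIV. x$i * M$i$j * y$j)"
  by (simp add: inner_vec_def matrix_vector_mult_def sum_distrib_left mult.assoc)

lemma proj_uv_eq_scaleR_outer:
  fixes x :: "real^'m" and y :: "real^'n" and M :: "real^'n^'m"
  shows "proj_uv x y M = (x \<bullet> (M *v y)) *\<^sub>R outer x y"
proof -
  have "proj_uv x y M $ i $ j = (\<Sum>l\<in>UNIV. (\<Sum>k\<in>UNIV. x$i * x$k * M$k$l) * (y$l * y$j))"
    for i j by (simp add: proj_uv_def matrix_matrix_mult_def outer_def)
  also have "\<dots> i j = (\<Sum>l\<in>UNIV. \<Sum>k\<in>UNIV. x$i * x$k * M$k$l * y$l * y$j)" for i j
    by (simp add: sum_distrib_right mult.assoc)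
  also have "\<dots> i j = (\<Sum>k\<in>UNIV. \<Sum>l\<in>UNIV. x$i * x$k * M$k$l * y$l * y$j)" for i j
    by (rule sum.swap)
  also have "\<dots> i j = ((x \<bullet> (M *v y)) *\<^sub>R outer x y) $ i $ j" for i j
    by (simp add: inner_vec_def matrix_vector_mult_def outer_def sum_distrib_left
        sum_distrib_right mult_ac)
  finally show ?thesis
    by (simp add: vec_eq_iff)
qed

lemma frob_norm_scaleR_outer_diff_power2:
  fixes x :: "real^'m" and y :: "real^'n" and P :: "real^'n^'m"
  assumes "norm x = 1" "norm y = 1"
  shows "(frob_norm (c *\<^sub>R outer x y - P))\<^sup>2 = c\<^sup>2 - 2 * c * (x \<bullet> (P *v y)) + (frob_norm P)\<^sup>2"
proof -
  have "(frob_norm (c *\<^sub>R outer x y - P))\<^sup>2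
      = (\<Sum>i\<in>UNIV. \<Sum>j\<in>UNIV. c\<^sup>2 * ((x$i)\<^sup>2 * (y$j)\<^sup>2) - 2 * c * (x$i * P$i$j * y$j) + (P$i$j)\<^sup>2)"
    unfolding frob_norm_power2
    by (intro sum.cong refl) (simp add: outer_def power2_eq_square algebra_simps)
  also have "\<dots> = c\<^sup>2 * ((\<Sum>i\<in>UNIV. (x$i)\<^sup>2) * (\<Sum>j\<in>UNIV. (y$j)\<^sup>2))
      - 2 * c * (x \<bullet> (P *v y)) + (frob_norm P)\<^sup>2"
    by (simp add: sum.distrib sum_subtractf sum_product inner_matrix_vector_mult_eq_sum
        frob_norm_power2 flip: sum_distrib_left)
  finally show ?thesis
    using assms by (simp add: sum_power2_eq_norm_power2)
qed

lemma frob_norm_proj_uv_diff_power2: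
  fixes x :: "real^'m" and y :: "real^'n" and M P :: "real^'n^'m"
  assumes "norm x = 1" "norm y = 1"
  shows "(frob_norm (proj_uv x y M - P))\<^sup>2
    = (x \<bullet> (M *v y))\<^sup>2 - 2 * (x \<bullet> (M *v y)) * (x \<bullet> (P *v y)) + (frob_norm P)\<^sup>2"
  using assms by (simp add: proj_uv_eq_scaleR_outer frob_norm_scaleR_outer_diff_power2)

lemma inner_proj_J_mult:
  fixes x :: "real^'m" and y :: "real^'n" and M :: "real^'n^'m"
  assumes "\<forall>i. i \<notin> J1 \<longrightarrow> x$i = 0" "\<forall>j. j \<notin> J2 \<longrightarrow> y$j = 0"
  shows "x \<bullet> (proj_J J1 J2 M *v y) = x \<bullet> (M *v y)"
  unfolding inner_matrix_vector_mult_eq_sum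
  using assms by (intro sum.cong refl) (auto simp: proj_J_def)

lemma abs_inner_mult_le_max_sing_val:
  fixes x :: "real^'m" and y :: "real^'n" and M :: "real^'n^'m"
  shows "\<bar>x \<bullet> (M *v y)\<bar> \<le> max_sing_val M * norm x * norm y"
proof -
  have "\<bar>x \<bullet> (M *v y)\<bar> \<le> norm x * norm (M *v y)"
    by (rule Cauchy_Schwarz_ineq2)
  also have "\<dots> \<le> norm x * (max_sing_val M * norm y)"
    unfolding max_sing_val_def by (intro mult_left_mono onorm) simp_all
  finally show ?thesis
    by (simp add: mult_ac)
qed

lemma top_sing_pair_inner_mult:
  assumes "top_sing_pair M u v"
  shows "u \<bullet> (M *v v) = max_sing_val M"
  using assms by (simp add: top_sing_pair_def dot_square_norm)

theorem lemma6:
  fixes P Xi A :: "real^'n^'m" and J1 :: "'m set" and J2 :: "'n set"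
    and u uh :: "real^'m" and v vh :: "real^'n"
  assumes "A = P + Xi"
    and "top_sing_pair (proj_J J1 J2 A) uh vh"
    and "top_sing_pair (proj_J J1 J2 P) u v"
    and "\<forall>i. i \<notin> J1 \<longrightarrow> uh$i = 0" and "\<forall>j. j \<notin> J2 \<longrightarrow> vh$j = 0"
    and "\<forall>i. i \<notin> J1 \<longrightarrow> u$i = 0" and "\<forall>j. j \<notin> J2 \<longrightarrow> v$j = 0"
  shows "frob_norm (proj_uv u v (proj_J J1 J2 P) - P)
           \<le> frob_norm (proj_uv uh vh (proj_J J1 J2 P) - P)
       \<and> frob_norm (proj_uv uh vh (proj_J J1 J2 P) - P)
           \<le> frob_norm (proj_uv uh vh (proj_J J1 J2 A) - P)"
proof -
  let ?Q = "proj_J J1 J2 P"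
  define s where "s = max_sing_val ?Q"
  define a where "a = uh \<bullet> (P *v vh)"
  define b where "b = uh \<bullet> (proj_J J1 J2 A *v vh)"
  have unit: "norm u = 1" "norm v = 1" "norm uh = 1" "norm vh = 1"
    using assms(2,3) by (simp_all add: top_sing_pair_def)
  have s: "u \<bullet> (?Q *v v) = s" "u \<bullet> (P *v v) = s"
    using top_sing_pair_inner_mult[OF assms(3)] inner_proj_J_mult[OF assms(6,7)]
    by (simp_all add: s_def)
  have a: "uh \<bullet> (?Q *v vh) = a"
    using inner_proj_J_mult[OF assms(4,5)] by (simp add: a_def)
  have "\<bar>a\<bar> \<le> s"
    using abs_inner_mult_le_max_sing_val[of uh ?Q vh] unit a by (simp add: s_def)
  then have a_s: "a\<^sup>2 \<le> s\<^sup>2"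
    by (simp add: abs_le_square_iff[symmetric])
  have err_P: "(frob_norm (proj_uv u v ?Q - P))\<^sup>2 = (frob_norm P)\<^sup>2 - s\<^sup>2"
    unfolding frob_norm_proj_uv_diff_power2[OF unit(1,2)] s by (simp add: power2_eq_square)
  have err_hat_P: "(frob_norm (proj_uv uh vh ?Q - P))\<^sup>2 = (frob_norm P)\<^sup>2 - a\<^sup>2"
    unfolding frob_norm_proj_uv_diff_power2[OF unit(3,4)] a a_def[symmetric]
    by (simp add: power2_eq_square)
  have err_hat_A: "(frob_norm (proj_uv uh vh (proj_J J1 J2 A) - P))\<^sup>2
      = (frob_norm P)\<^sup>2 - a\<^sup>2 + (b - a)\<^sup>2"
    unfolding frob_norm_proj_uv_diff_power2[OF unit(3,4)] a_def[symmetric] b_def[symmetric]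
    by (simp add: power2_eq_square left_diff_distrib right_diff_distrib)
  have "(frob_norm (proj_uv u v ?Q - P))\<^sup>2 \<le> (frob_norm (proj_uv uh vh ?Q - P))\<^sup>2"
    using err_P err_hat_P a_s by linarith
  moreover have "(frob_norm (proj_uv uh vh ?Q - P))\<^sup>2
      \<le> (frob_norm (proj_uv uh vh (proj_J J1 J2 A) - P))\<^sup>2"
    using err_hat_P err_hat_A zero_le_power2[of "b - a"] by linarith
  ultimately show ?thesis
    by (metis frob_norm_nonneg power2_le_imp_le)
qed

end
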